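(* Let $\mathcal C^*$ be as in the context and let $\ell$ be a positive integer with $|\mathcal C^*|\ge\ell$. Then there is a set $\mathbb T$ of neighborhood trees such that: (T1) $\ell\le|\mathcal V|\le\ell^2$ for every $(\mathcal V,E,r)\in\mathbb T$; (T2) $\bigcup_{(\mathcal V,E,r)\in\mathbb T}\mathcal V=\mathcal C^*$; (T3) for any two distinct trees $(\mathcal V,E,r),(\mathcal V',E',r')\in\mathbb T$, the sets $\mathcal V\setminus\{r\}$ and $\mathcal V'\setminus\{r'\}$ are disjoint.
   Context: $\mathcal C^*$ is the set of client representatives: given finite sets $\mathcal F,\mathcal C$, a metric $d$ on $\mathcal F\cup\mathcal C$, reals $x_{i,j}\ge0$ with $\sum_ix_{i,j}=1$, $d_{av}(j)=\sum_ix_{i,j}d(i,j)$, and a positive integer parameter $\ell_0$, start with $\mathcal C^*=\emptyset$, $R=\mathcal C$; while $R\ne\emptyset$, choose $v\in R$ with smallest $d_{av}(v)$, add it to $\mathcal C^*$, and remove from $R$ all $j$ with $d(j,v)\le2\ell_0d_{av}(j)$. A rooted tree $T=(\mathcal V,E,r)$ consists of a vertex set $\mathcal V\subseteq\mathcal C^*$, an edge set $E$ forming a tree on $\mathcal V$, and a root $r\in\mathcal V$. For $v\in\mathcal V$, $\Lambda_T(v)$ is the set of vertices of the subtree rooted at $v$, and for $v\ne r$, $\rho_T(v)$ is the parent of $v$. $T$ is a neighborhood tree if for every $v\in\mathcal V\setminus\{r\}$, $d(v,\mathcal C^*\setminus\Lambda_T(v))=d(v,\rho_T(v))$, where $d(v,\mathcal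 X)=\min_{w\in\mathcal X}d(v,w)$. *)

theory Defs
  imports Complex_Main
begin

definition is_metric_on :: "'a set \<Rightarrow> ('a \<Rightarrow> 'a \<Rightarrow> real) \<Rightarrow> bool" where
  "is_metric_on S d \<longleftrightarrow>
     (\<forall>u\<in>S. \<forall>v\<in>S. d u v \<ge> 0) \<and>
     (\<forall>u\<in>S. \<forall>v\<in>S. d u v = 0 \<longleftrightarrow> u = v) \<and>
     (\<forall>u\<in>S. \<forall>v\<in>S. d u v = d v u) \<and>
     (\<forall>u\<in>S. \<forall>v\<in>S. \<forall>w\<in>S. d u w \<le> d u v + d v w)"

definition d_av :: "'a set \<Rightarrow> ('a \<Rightarrow> 'a \<Rightarrow> real) \<Rightarrow> ('a \<Rightarrow> 'a \<Rightarrow> real) \<Rightarrow> 'a \<Rightarrow> real" where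
  "d_av F d x j = (\<Sum>i\<in>F. x i j * d i j)"

text \<open>One step of the greedy procedure on the state (C*, R); ties in the choice
  of v with smallest average distance are broken arbitrarily.\<close>
inductive reps_run :: "'a set \<Rightarrow> 'a set \<Rightarrow> ('a \<Rightarrow> 'a \<Rightarrow> real) \<Rightarrow> ('a \<Rightarrow> 'a \<Rightarrow> real)
    \<Rightarrow> nat \<Rightarrow> 'a set \<Rightarrow> 'a set \<Rightarrow> bool"
  for F C d x l0 where
  start: "reps_run F C d x l0 {} C"
| step: "reps_run F C d x l0 Cs R \<Longrightarrow> v \<in> R \<Longrightarrow>
          (\<forall>u\<in>R. d_av F d x v \<le> d_av F d x u) \<Longrightarrow>
          reps_run F C d x l0 (insert v Cs)
             (R - {j\<in>R. d j v \<le> 2 * real l0 * d_av F d x j})"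

definition client_reps :: "'a set \<Rightarrow> 'a set \<Rightarrow> ('a \<Rightarrow> 'a \<Rightarrow> real) \<Rightarrow> ('a \<Rightarrow> 'a \<Rightarrow> real)
    \<Rightarrow> nat \<Rightarrow> 'a set \<Rightarrow> bool" where
  "client_reps F C d x l0 Cs \<longleftrightarrow> reps_run F C d x l0 Cs {}"

definition adj :: "'a set set \<Rightarrow> ('a \<times> 'a) set" where
  "adj E = {(u, v). {u, v} \<in> E \<and> u \<noteq> v}"

definition connected_in :: "'a set set \<Rightarrow> 'a \<Rightarrow> 'a \<Rightarrow> bool" where
  "connected_in E u v \<longleftrightarrow> (u, v) \<in> (adj E)\<^sup>*"

definition is_tree :: "'a set \<Rightarrow> 'a set set \<Rightarrow> bool" where
  "is_tree V E \<longleftrightarrow> finite V \<and> V \<noteq> {} \<and>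
     (\<forall>e\<in>E. e \<subseteq> V \<and> card e = 2) \<and>
     (\<forall>u\<in>V. \<forall>v\<in>V. connected_in E u v) \<and>
     \<comment> \<open>acyclic: no edge lies on a cycle\<close>
     (\<forall>u v. {u, v} \<in> E \<and> u \<noteq> v \<longrightarrow> \<not> connected_in (E - {{u, v}}) u v)"

type_synonym 'a rtree = "'a set \<times> 'a set set \<times> 'a"

definition is_rooted_tree :: "'a set \<Rightarrow> 'a rtree \<Rightarrow> bool" where
  "is_rooted_tree Cs T = (case T of (V, E, r) \<Rightarrow> V \<subseteq> Cs \<and> is_tree V E \<and> r \<in> V)"

text \<open>Vertex set of the subtree rooted at v: the vertices w whose path to the root
  passes through v, i.e. w = v or w is separated from r once v is deleted.\<close>
definition subtree :: "'a rtree \<Rightarrow> 'a \<Rightarrow> 'a set" where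
  "subtree T v = (case T of (V, E, r) \<Rightarrow>
     {w\<in>V. w = v \<or> \<not> connected_in {e\<in>E. v \<notin> e} w r})"

definition parent :: "'a rtree \<Rightarrow> 'a \<Rightarrow> 'a" where
  "parent T v = (case T of (V, E, r) \<Rightarrow> THE u. {u, v} \<in> E \<and> u \<noteq> v \<and> u \<notin> subtree T v)"

definition dist_set :: "('a \<Rightarrow> 'a \<Rightarrow> real) \<Rightarrow> 'a \<Rightarrow> 'a set \<Rightarrow> real" where
  "dist_set d v X = Min ((\<lambda>w. d v w) ` X)"

definition neighborhood_tree :: "('a \<Rightarrow> 'a \<Rightarrow> real) \<Rightarrow> 'a set \<Rightarrow> 'a rtree \<Rightarrow> bool" where
  "neighborhood_tree d Cs T \<longleftrightarrow> is_rooted_tree Cs T \<and>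
     (case T of (V, E, r) \<Rightarrow>
        \<forall>v\<in>V - {r}. dist_set d v (Cs - subtree T v) = d v (parent T v))"

end

theory Submission
  imports Defs
begin

text \<open>
  Take a greedy walk c 0, c 1, \<dots> through the representatives, each step going to a nearest
  representative not yet on the walk, and stop after l vertices or when the walk hits a vertex
  handled earlier. Every representative closer to c i than c (i + 1) lies earlier on the walk, so
  the walk, rooted at its last vertex, satisfies the neighborhood condition, and this survives
  grafting such trees onto each other at their roots. The representatives off the walk are
  decomposed recursively, leaving trees of at most l - 2 vertices pending below walk vertices.
  A walk of k vertices together with these has between k and k (l - 1) vertices: if there are at
  least l, it becomes a tree of its own; otherwise it is grafted below the vertex where it stopped,
  which either yields a tree of at most l^2 vertices rooted there or a larger pending tree.
\<close>

section \<open>Rooted trees given by parent maps\<close>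

text \<open>descendant q t v w: following the parent map q from w reaches v before reaching the root t.\<close>

inductive descendant :: "('a \<Rightarrow> 'a) \<Rightarrow> 'a \<Rightarrow> 'a \<Rightarrow> 'a \<Rightarrow> bool" for q t v where
  refl: "descendant q t v v"
| parent: "w \<noteq> v \<Longrightarrow> w \<noteq> t \<Longrightarrow> descendant q t v (q w) \<Longrightarrow> descendant q t v w"

lemma descendant_trans: "descendant q t v x \<Longrightarrow> descendant q t w v \<Longrightarrow> descendant q t w x"
proof (induction rule: descendant.induct)
  case (parent x)
  then show ?case by (cases "x = w") (auto intro: descendant.intros)
qed

lemma descendant_cong:
  assumes "descendant q t v x" "x \<in> V"
    and "\<And>y. y \<in> V \<Longrightarrow> y \<noteq> t \<Longrightarrow> y \<noteq> v \<Longrightarrow> q y \<in> V \<and> y \<noteq> t' \<and> q' y = q y"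
  shows "descendant q' t' v x"
  using assms
proof (induction rule: descendant.induct)
  case refl show ?case by (rule descendant.refl)
next
  case (parent w) then show ?case by (metis descendant.parent)
qed

lemma descendant_of_root: "descendant q t v t \<Longrightarrow> t = v"
  by (cases rule: descendant.cases) auto

lemma descendant_parentD: "descendant q t v w \<Longrightarrow> w \<noteq> v \<Longrightarrow> descendant q t v (q w)"
  by (cases rule: descendant.cases) auto

text \<open>If q v were below v, the q-path from v would cycle through v without ever reaching t.\<close>
lemma parent_not_descendant:
  assumes "descendant q t t v" "v \<noteq> t"
  shows "\<not> descendant q t v (q v)"
proof
  assume "descendant q t v (q v)"
  have "descendant q t v y \<Longrightarrow> False" if "descendant q t t y" for y
    using that
  proof (induction rule: descendant.induct)
    case refl then show ?case using descendant_of_root \<open>v \<noteq> t\<close> by metis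
  next
    case (parent y)
    show ?case
    proof (cases "y = v")
      case True then show ?thesis using parent \<open>descendant q t v (q v)\<close> by simp
    next
      case False then show ?thesis using parent descendant_parentD by metis
    qed
  qed
  then show False using assms(1) descendant.refl[of q t v] by blast
qed

definition parent_edges :: "('a \<Rightarrow> 'a) \<Rightarrow> 'a set \<Rightarrow> 'a \<Rightarrow> 'a set set" where
  "parent_edges q V t = (\<lambda>v. {v, q v}) ` (V - {t})"

lemma connected_in_sym: "connected_in E u v \<Longrightarrow> connected_in E v u"
proof -
  have "sym (adj E)" unfolding adj_def sym_def by (auto simp: insert_commute)
  then show "connected_in E u v \<Longrightarrow> connected_in E v u"
    unfolding connected_in_def by (metis sym_conv_converse_eq rtrancl_converseI)
qed

locale parent_tree =
  fixes q :: "'a \<Rightarrow> 'a" and V :: "'a set" and t :: 'a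
  assumes finite: "finite V" and root: "t \<in> V"
    and parent_closed: "\<And>v. v \<in> V \<Longrightarrow> v \<noteq> t \<Longrightarrow> q v \<in> V"
    and below_root: "\<And>v. v \<in> V \<Longrightarrow> descendant q t t v"
begin

abbreviation "E \<equiv> parent_edges q V t"

lemma parent_ne: "v \<in> V \<Longrightarrow> v \<noteq> t \<Longrightarrow> q v \<noteq> v"
  using parent_not_descendant below_root descendant.refl by metis

lemma edge_iff: "e \<in> E \<longleftrightarrow> (\<exists>y\<in>V - {t}. e = {y, q y})"
  unfolding parent_edges_def by auto

lemma connected_to_root:
  assumes "v \<in> V"
  shows "connected_in E v t"
  using below_root[OF assms] assms unfolding connected_in_def
proof (induction rule: descendant.induct)
  case (parent w)
  have "(w, q w) \<in> adj E" using parent parent_ne[of w] by (auto simp: adj_def edge_iff)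
  then show ?case using parent parent_closed by (blast intro: converse_rtrancl_into_rtrancl)
qed simp

lemma descendants_closed:
  assumes "(a, b) \<in> (adj (E - {{x, q x}}))\<^sup>*"
  shows "descendant q t x a \<longleftrightarrow> descendant q t x b"
  using assms
proof (induction rule: rtrancl_induct)
  case (step b c)
  have bc: "{b, c} \<in> E" "{b, c} \<noteq> {x, q x}" using step.hyps(2) by (auto simp: adj_def)
  then obtain y where y: "y \<in> V" "y \<noteq> t" "{b, c} = {y, q y}" unfolding edge_iff by blast
  then have "y \<noteq> x" using bc(2) by blast
  then have "descendant q t x y \<longleftrightarrow> descendant q t x (q y)"
    using y descendant_parentD descendant.parent by metis
  then show ?case using step.IH y(3) by (auto simp: doubleton_eq_iff)
qed simp

lemma is_tree: "is_tree V E"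
  unfolding is_tree_def
proof (intro conjI ballI allI impI)
  show "finite V" "V \<noteq> {}" using finite root by auto
  fix e assume "e \<in> E"
  then obtain y where "y \<in> V" "y \<noteq> t" "e = {y, q y}" by (auto simp: edge_iff)
  moreover have "q y \<noteq> y" using parent_ne \<open>y \<in> V\<close> \<open>y \<noteq> t\<close> by blast
  ultimately show "e \<subseteq> V" "card e = 2" using parent_closed by auto
next
  fix u v assume "u \<in> V" "v \<in> V"
  then show "connected_in E u v"
    using connected_to_root connected_in_sym unfolding connected_in_def by (meson rtrancl_trans)
next
  fix u v assume "{u, v} \<in> E \<and> u \<noteq> v"
  then obtain x where x: "x \<in> V" "x \<noteq> t" "{u, v} = {x, q x}" unfolding edge_iff by blast
  text \<open>The descendants of x are separated from the rest once the edge to q x is removed.\<close>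
  have "\<not> descendant q t x (q x)" using parent_not_descendant[OF below_root[OF x(1)] x(2)] .
  moreover have "(u = x \<and> v = q x) \<or> (u = q x \<and> v = x)" using x(3) by (simp add: doubleton_eq_iff)
  ultimately have "\<not> (descendant q t x u \<longleftrightarrow> descendant q t x v)"
    using descendant.refl[of q t x] by blast
  then show "\<not> connected_in (E - {{u, v}}) u v"
    unfolding connected_in_def x(3) using descendants_closed by blast
qed

lemma subtree_eq:
  assumes "v \<in> V" "v \<noteq> t"
  shows "subtree (V, E, t) v = {w\<in>V. descendant q t v w}"
proof -
  let ?E = "{e\<in>E. v \<notin> e}"
  have outside: "connected_in ?E w t" if "w \<in> V" "\<not> descendant q t v w" for w
    using below_root[OF that(1)] that unfolding connected_in_def
  proof (induction rule: descendant.induct)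
    case (parent w)
    have wt: "w \<noteq> t" by fact
    have wv: "w \<noteq> v" using parent.prems(2) descendant.refl by metis
    have nd: "\<not> descendant q t v (q w)" using parent.prems(2) wv wt descendant.parent by metis
    have "q w \<noteq> v" using nd descendant.refl by metis
    moreover have "q w \<noteq> w" using parent_ne parent.prems(1) wt by blast
    moreover have "{w, q w} \<in> E" using parent.prems(1) wt unfolding edge_iff by blast
    ultimately have "(w, q w) \<in> adj ?E" using wv unfolding adj_def by auto
    moreover have "(q w, t) \<in> (adj ?E)\<^sup>*"
      using parent.IH parent_closed[OF parent.prems(1) wt] nd by blast
    ultimately show ?case by (rule converse_rtrancl_into_rtrancl)
  qed simp
  have inside: "\<not> connected_in ?E w t" if "descendant q t v w" for w
  proof
    assume "connected_in ?E w t"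
    moreover have "adj ?E \<subseteq> adj (E - {{v, q v}})" unfolding adj_def by auto
    ultimately have "(w, t) \<in> (adj (E - {{v, q v}}))\<^sup>*"
      unfolding connected_in_def using rtrancl_mono by blast
    then have "descendant q t v t" using descendants_closed that by blast
    then show False using descendant_of_root assms(2) by metis
  qed
  have "w = v \<or> \<not> connected_in ?E w t \<longleftrightarrow> descendant q t v w" if "w \<in> V" for w
    using outside[OF that] inside descendant.refl by metis
  then show ?thesis unfolding subtree_def prod.case by blast
qed

lemma parent_eq:
  assumes "v \<in> V" "v \<noteq> t"
  shows "parent (V, E, t) v = q v"
  unfolding parent_def prod.case
proof (rule the_equality)
  have "\<not> descendant q t v (q v)" using parent_not_descendant[OF below_root[OF assms(1)] assms(2)] .
  moreover have "{q v, v} \<in> E" using assms unfolding edge_iff by (blast intro: insert_commute)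
  ultimately show "{q v, v} \<in> E \<and> q v \<noteq> v \<and> q v \<notin> subtree (V, E, t) v"
    using assms parent_ne by (simp add: subtree_eq)
next
  fix u assume u: "{u, v} \<in> E \<and> u \<noteq> v \<and> u \<notin> subtree (V, E, t) v"
  then obtain y where y: "y \<in> V" "y \<noteq> t" "{u, v} = {y, q y}" unfolding edge_iff by blast
  show "u = q v"
  proof (rule ccontr)
    assume "u \<noteq> q v"
    then have "u = y" "q u = v" using y u by (auto simp: doubleton_eq_iff)
    text \<open>Then u would hang directly below v.\<close>
    then have "descendant q t v u" using u y descendant.intros by metis
    then show False using u y \<open>u = y\<close> by (simp add: subtree_eq assms)
  qed
qed

end

section \<open>Parent trees with the neighborhood property\<close>

definition nbh_parent_tree :: "'a set \<Rightarrow> ('a \<Rightarrow> 'a \<Rightarrow> real) \<Rightarrow> ('a \<Rightarrow> 'a) \<Rightarrow> 'a set \<Rightarrow> 'a \<Rightarrow> bool"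
  where "nbh_parent_tree Cs d q V t \<longleftrightarrow> parent_tree q V t \<and> V \<subseteq> Cs \<and>
     (\<forall>v\<in>V - {t}. \<forall>w\<in>Cs. d v w < d v (q v) \<longrightarrow> w \<in> V \<and> descendant q t v w)"

lemma nbh_parent_treeI:
  assumes "parent_tree q V t" "V \<subseteq> Cs"
    and "\<And>v w. v \<in> V \<Longrightarrow> v \<noteq> t \<Longrightarrow> w \<in> Cs \<Longrightarrow> d v w < d v (q v) \<Longrightarrow> w \<in> V \<and> descendant q t v w"
  shows "nbh_parent_tree Cs d q V t"
  using assms unfolding nbh_parent_tree_def by blast

lemma nbh_parent_treeD:
  assumes "nbh_parent_tree Cs d q V t"
  shows "parent_tree q V t" "V \<subseteq> Cs"
    and "\<And>v w. v \<in> V \<Longrightarrow> v \<noteq> t \<Longrightarrow> w \<in> Cs \<Longrightarrow> d v w < d v (q v) \<Longrightarrow> w \<in> V \<and> descendant q t v w"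
  using assms unfolding nbh_parent_tree_def by blast+

lemma neighborhood_tree_parent_edges:
  assumes T: "nbh_parent_tree Cs d q V t" and "finite Cs"
  shows "neighborhood_tree d Cs (V, parent_edges q V t, t)"
proof -
  interpret parent_tree q V t using nbh_parent_treeD(1)[OF T] .
  have "dist_set d v (Cs - subtree (V, E, t) v) = d v (parent (V, E, t) v)"
    if v: "v \<in> V" "v \<noteq> t" for v
  proof -
    have subtree: "subtree (V, E, t) v = {w\<in>V. descendant q t v w}" by (rule subtree_eq[OF v])
    have "q v \<in> Cs - subtree (V, E, t) v"
      using subtree parent_not_descendant[OF below_root[OF v(1)] v(2)] parent_closed[OF v]
        nbh_parent_treeD(2)[OF T] by auto
    moreover have "d v (q v) \<le> d v w" if w: "w \<in> Cs - subtree (V, E, t) v" for w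
    proof (rule ccontr)
      assume "\<not> d v (q v) \<le> d v w"
      then have "w \<in> subtree (V, E, t) v" using nbh_parent_treeD(3)[OF T v, of w] w subtree by simp
      then show False using w by simp
    qed
    ultimately have "Min ((\<lambda>w. d v w) ` (Cs - subtree (V, E, t) v)) = d v (q v)"
      using \<open>finite Cs\<close> by (intro Min_eqI) auto
    then show ?thesis unfolding dist_set_def using parent_eq[OF v] by simp
  qed
  moreover have "is_rooted_tree Cs (V, E, t)"
    using is_tree root nbh_parent_treeD(2)[OF T] unfolding is_rooted_tree_def by simp
  ultimately show ?thesis unfolding neighborhood_tree_def by simp
qed

lemma nbh_parent_tree_singleton: "a \<in> Cs \<Longrightarrow> nbh_parent_tree Cs d q {a} a"
  by (rule nbh_parent_treeI) (auto simp: parent_tree_def intro: descendant.refl)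

lemma nbh_parent_tree_cong:
  assumes T: "nbh_parent_tree Cs d q V t" and agree: "\<And>y. y \<in> V - {t} \<Longrightarrow> q' y = q y"
  shows "nbh_parent_tree Cs d q' V t"
proof -
  interpret parent_tree q V t using nbh_parent_treeD(1)[OF T] .
  have desc: "descendant q' t v w" if "descendant q t v w" "w \<in> V" for v w
    using descendant_cong[OF that] parent_closed agree by blast
  show ?thesis
  proof (rule nbh_parent_treeI)
    show "parent_tree q' V t"
      by unfold_locales (use finite root parent_closed agree below_root desc in auto)
    show "V \<subseteq> Cs" using nbh_parent_treeD(2)[OF T] .
    fix v w assume "v \<in> V" "v \<noteq> t" "w \<in> Cs" "d v w < d v (q' v)"
    then show "w \<in> V \<and> descendant q' t v w" using nbh_parent_treeD(3)[OF T] agree desc by simp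
  qed
qed

lemma nbh_parent_tree_graft:
  assumes T1: "nbh_parent_tree Cs d q V1 v" and T2: "nbh_parent_tree Cs d q V2 t"
    and v: "v \<in> V2" and disj: "(V1 - {v}) \<inter> V2 = {}"
  shows "nbh_parent_tree Cs d q (V1 \<union> V2) t"
proof -
  interpret P1: parent_tree q V1 v using nbh_parent_treeD(1)[OF T1] .
  interpret P2: parent_tree q V2 t using nbh_parent_treeD(1)[OF T2] .
  have lift: "descendant q t y x" if "descendant q v y x" "x \<in> V1" for x y
  proof (rule descendant_cong[OF that])
    fix z assume "z \<in> V1" "z \<noteq> v"
    then show "q z \<in> V1 \<and> z \<noteq> t \<and> q z = q z" using P1.parent_closed P2.root disj by blast
  qed
  have parent_closed: "q x \<in> V1 \<union> V2" if "x \<in> V1 \<union> V2" "x \<noteq> t" for x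
  proof (cases "x \<in> V2")
    case False
    then have "x \<in> V1" "x \<noteq> v" using that v by auto
    then show ?thesis using P1.parent_closed by simp
  qed (simp add: P2.parent_closed that(2))
  have below_root: "descendant q t t x" if "x \<in> V1 \<union> V2" for x
  proof (cases "x \<in> V2")
    case False
    then have "descendant q t v x" using that lift[OF P1.below_root] by blast
    then show ?thesis by (rule descendant_trans[OF _ P2.below_root[OF v]])
  qed (rule P2.below_root)
  show ?thesis
  proof (rule nbh_parent_treeI)
    show "parent_tree q (V1 \<union> V2) t"
      using P1.finite P2.finite P2.root parent_closed below_root by unfold_locales blast+
    show "V1 \<union> V2 \<subseteq> Cs" using nbh_parent_treeD(2)[OF T1] nbh_parent_treeD(2)[OF T2] by blast
    fix x w assume x: "x \<in> V1 \<union> V2" "x \<noteq> t" and w: "w \<in> Cs" "d x w < d x (q x)"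
    show "w \<in> V1 \<union> V2 \<and> descendant q t x w"
    proof (cases "x \<in> V2")
      case True
      then show ?thesis using nbh_parent_treeD(3)[OF T2 True x(2) w] by blast
    next
      case False
      then have "x \<in> V1" "x \<noteq> v" using x v by auto
      then have "w \<in> V1" "descendant q v x w" using nbh_parent_treeD(3)[OF T1 _ _ w] by blast+
      then show ?thesis using lift by blast
    qed
  qed
qed

lemma nbh_parent_tree_graft_family:
  assumes "finite A" and T: "nbh_parent_tree Cs d q V t" and "A \<subseteq> V"
    and pend: "\<And>a. a \<in> A \<Longrightarrow> nbh_parent_tree Cs d q (insert a (S a)) a"
    and disj: "\<And>a. a \<in> A \<Longrightarrow> S a \<inter> V = {}"
    and pairwise_disj: "\<And>a b. a \<in> A \<Longrightarrow> b \<in> A \<Longrightarrow> a \<noteq> b \<Longrightarrow> S a \<inter> S b = {}"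
  shows "nbh_parent_tree Cs d q (V \<union> (\<Union>a\<in>A. S a)) t"
  using \<open>finite A\<close> order.refl[of A]
proof (induction rule: finite_subset_induct')
  case (insert a B)
  have "(insert a (S a) - {a}) \<inter> (V \<union> (\<Union>b\<in>B. S b)) = {}"
    using disj[OF insert.hyps(2)] pairwise_disj[OF insert.hyps(2)] insert.hyps(3,4) by blast
  moreover have "a \<in> V \<union> (\<Union>b\<in>B. S b)" using insert.hyps(2) \<open>A \<subseteq> V\<close> by blast
  ultimately have "nbh_parent_tree Cs d q (insert a (S a) \<union> (V \<union> (\<Union>b\<in>B. S b))) t"
    using nbh_parent_tree_graft[OF pend[OF insert.hyps(2)] insert.IH] by blast
  moreover have "insert a (S a) \<union> (V \<union> (\<Union>b\<in>B. S b)) = V \<union> (\<Union>b\<in>insert a B. S b)"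
    using insert.hyps(2) \<open>A \<subseteq> V\<close> by blast
  ultimately show ?case by simp
qed (simp add: T)

lemma nbh_parent_tree_path:
  assumes "0 < n" and inj: "inj_on c {..<n}" and "c ` {..<n} \<subseteq> Cs"
    and parent_step: "\<And>i. Suc i < n \<Longrightarrow> q (c i) = c (Suc i)"
    and near: "\<And>i w. Suc i < n \<Longrightarrow> w \<in> Cs \<Longrightarrow> d (c i) w < d (c i) (c (Suc i)) \<Longrightarrow> w \<in> c ` {..i}"
  shows "nbh_parent_tree Cs d q (c ` {..<n}) (c (n - 1))"
proof -
  let ?t = "c (n - 1)"
  have desc: "descendant q ?t (c i) (c j)" if "j \<le> i" "i < n" for i j
    using that(1)
  proof (induction j rule: inc_induct)
    case (step j)
    have "c j \<noteq> c i" "c j \<noteq> ?t" using inj step.hyps \<open>i < n\<close> by (auto dest: inj_onD)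
    moreover have "q (c j) = c (Suc j)" using parent_step step.hyps(2) \<open>i < n\<close> by simp
    ultimately show ?case using step.IH by (simp add: descendant.parent)
  qed (rule descendant.refl)
  have last: "i < n - 1" if "i < n" "c i \<noteq> ?t" for i
    using that by (cases "i = n - 1") auto
  show ?thesis
  proof (rule nbh_parent_treeI)
    show "parent_tree q (c ` {..<n}) ?t"
    proof
      show "finite (c ` {..<n})" "?t \<in> c ` {..<n}" using \<open>0 < n\<close> by auto
      fix v assume "v \<in> c ` {..<n}"
      then obtain i where i: "i < n" "v = c i" by blast
      show "q v \<in> c ` {..<n}" if "v \<noteq> ?t"
      proof -
        have "i < n - 1" using last i that by blast
        then have "Suc i < n" by simp
        then show ?thesis using i parent_step by simp
      qed
      show "descendant q ?t ?t v" using i desc[of i "n - 1"] by simp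
    qed
    show "c ` {..<n} \<subseteq> Cs" by fact
    fix v w assume v: "v \<in> c ` {..<n}" "v \<noteq> ?t" and w: "w \<in> Cs" "d v w < d v (q v)"
    then obtain i where i: "i < n - 1" "v = c i" using last by blast
    then have "Suc i < n" by simp
    then have "w \<in> c ` {..i}" using near w i parent_step by simp
    then obtain j where "j \<le> i" "w = c j" by blast
    then show "w \<in> c ` {..<n} \<and> descendant q ?t v w" using desc[of j i] i by auto
  qed
qed

section \<open>Greedy walks\<close>

definition nearest_step :: "'a set \<Rightarrow> ('a \<Rightarrow> 'a \<Rightarrow> real) \<Rightarrow> (nat \<Rightarrow> 'a) \<Rightarrow> nat \<Rightarrow> bool" where
  "nearest_step Cs d c i \<longleftrightarrow>
     c (Suc i) \<in> Cs \<and> (\<forall>w\<in>Cs. d (c i) w < d (c i) (c (Suc i)) \<longrightarrow> w \<in> c ` {..i})"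

definition greedy_walk :: "'a set \<Rightarrow> ('a \<Rightarrow> 'a \<Rightarrow> real) \<Rightarrow> 'a set \<Rightarrow> (nat \<Rightarrow> 'a) \<Rightarrow> nat \<Rightarrow> bool" where
  "greedy_walk Cs d K c k \<longleftrightarrow> 0 < k \<and> inj_on c {..<k} \<and> c ` {..<k} \<subseteq> Cs - K \<and>
     (\<forall>i. Suc i < k \<longrightarrow> nearest_step Cs d c i)"

lemma nearest_step_cong:
  assumes "nearest_step Cs d c i" and "\<And>j. j \<le> Suc i \<Longrightarrow> c' j = c j"
  shows "nearest_step Cs d c' i"
proof -
  have "c' ` {..i} = c ` {..i}" using assms(2) by (intro image_cong) auto
  then show ?thesis using assms unfolding nearest_step_def by simp
qed

lemma greedy_walk_extend:
  assumes W: "greedy_walk Cs d K c k" and "finite Cs" "k < card Cs"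
  obtains c' where "greedy_walk Cs d K c' k" "nearest_step Cs d c' (k - 1)"
    and "c' k \<notin> K \<Longrightarrow> greedy_walk Cs d K c' (Suc k)"
proof -
  have k: "0 < k" and inj: "inj_on c {..<k}" and sub: "c ` {..<k} \<subseteq> Cs - K"
    and steps: "\<And>i. Suc i < k \<Longrightarrow> nearest_step Cs d c i"
    using W unfolding greedy_walk_def by blast+
  let ?A = "Cs - c ` {..<k}"
  let ?f = "d (c (k - 1))"
  have "card (c ` {..<k}) = k" using inj by (simp add: card_image)
  then have "\<not> Cs \<subseteq> c ` {..<k}"
    using \<open>k < card Cs\<close> card_mono[of "c ` {..<k}" Cs] by auto
  then have "?A \<noteq> {}" by blast
  moreover have "finite ?A" using \<open>finite Cs\<close> by simp
  ultimately have w: "arg_min_on ?f ?A \<in> ?A" "\<And>x. x \<in> ?A \<Longrightarrow> \<not> ?f x < ?f (arg_min_on ?f ?A)"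
    using arg_min_if_finite[of ?A ?f] by blast+
  define c' where "c' = c(k := arg_min_on ?f ?A)"
  have agree: "c' j = c j" if "j < k" for j using that unfolding c'_def by simp
  then have image: "c' ` {..<k} = c ` {..<k}" by (intro image_cong) auto
  have new: "c' k \<in> ?A" using w(1) unfolding c'_def by simp
  have "nearest_step Cs d c' (k - 1)" unfolding nearest_step_def
  proof (intro conjI ballI impI)
    have "Suc (k - 1) = k" "{..k - 1} = {..<k}" "c' (k - 1) = c (k - 1)" using k agree by auto
    moreover fix x assume "x \<in> Cs" "d (c' (k - 1)) x < d (c' (k - 1)) (c' (Suc (k - 1)))"
    ultimately show "x \<in> c' ` {..k - 1}" using w(2)[of x] image unfolding c'_def by auto
  qed (use new k in simp)
  moreover have W': "greedy_walk Cs d K c' k"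
    unfolding greedy_walk_def
  proof (intro conjI allI impI)
    show "inj_on c' {..<k}" using inj agree by (simp add: inj_on_def)
    fix i assume "Suc i < k"
    then show "nearest_step Cs d c' i" using steps agree nearest_step_cong[of Cs d c i c'] by simp
  qed (use k image sub in auto)
  moreover have "greedy_walk Cs d K c' (Suc k)" if "c' k \<notin> K"
    unfolding greedy_walk_def
  proof (intro conjI allI impI)
    show "inj_on c' {..<Suc k}" "c' ` {..<Suc k} \<subseteq> Cs - K"
      using W' new that image unfolding greedy_walk_def lessThan_Suc by auto
    fix i assume "Suc i < Suc k"
    then show "nearest_step Cs d c' i"
      using W' \<open>nearest_step Cs d c' (k - 1)\<close> unfolding greedy_walk_def
      by (cases "Suc i = k") auto
  qed simp
  ultimately show ?thesis using that by blast
qed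

lemma greedy_walk_exists:
  assumes "finite Cs" "Cs - K \<noteq> {}" "l \<le> card Cs" "0 < l"
  shows "\<exists>c k. greedy_walk Cs d K c k \<and> k \<le> l \<and> (k = l \<or> c k \<in> K \<and> nearest_step Cs d c (k - 1))"
proof -
  have "\<exists>c k. greedy_walk Cs d K c k \<and> k \<le> n \<and> (k = n \<or> c k \<in> K \<and> nearest_step Cs d c (k - 1))"
    if "0 < n" "n \<le> l" for n
    using that
  proof (induction n rule: nat_induct_non_zero)
    case 1
    obtain u where "u \<in> Cs - K" using assms(2) by blast
    then have "greedy_walk Cs d K (\<lambda>_. u) 1" unfolding greedy_walk_def by (simp add: lessThan_Suc)
    then show ?case by blast
  next
    case (Suc n)
    then obtain c k where W: "greedy_walk Cs d K c k" "k \<le> n"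
      and stop: "k = n \<or> c k \<in> K \<and> nearest_step Cs d c (k - 1)"
      by auto
    show ?case
    proof (cases "k = n")
      case True
      have "k < card Cs" using True Suc.prems \<open>l \<le> card Cs\<close> by simp
      then obtain c' where "greedy_walk Cs d K c' k" "nearest_step Cs d c' (k - 1)"
        and "c' k \<notin> K \<Longrightarrow> greedy_walk Cs d K c' (Suc k)"
        using greedy_walk_extend[OF W(1) \<open>finite Cs\<close>] by blast
      then show ?thesis
      proof (cases "c' k \<in> K")
        case True
        then show ?thesis using \<open>greedy_walk Cs d K c' k\<close> \<open>nearest_step Cs d c' (k - 1)\<close> \<open>k = n\<close>
          by (intro exI[of _ c'] exI[of _ k]) simp
      qed (use True in auto)
    next
      case False
      then show ?thesis using W stop by (intro exI[of _ c] exI[of _ k]) auto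
    qed
  qed
  then show ?thesis using \<open>0 < l\<close> by blast
qed

section \<open>Partial decompositions\<close>

text \<open>A decomposition of Cs - K into finished pieces P, whose interiors V - {t} are disjoint, and
  trees S a of at most l - 2 vertices pending below the vertices a \<in> K.\<close>
locale partial_decomposition =
  fixes Cs :: "'a set" and d :: "'a \<Rightarrow> 'a \<Rightarrow> real" and l :: nat and K :: "'a set"
    and q :: "'a \<Rightarrow> 'a" and P :: "('a set \<times> 'a) set" and S :: "'a \<Rightarrow> 'a set"
  assumes piece_tree: "(V, t) \<in> P \<Longrightarrow> nbh_parent_tree Cs d q V t"
    and piece_card: "(V, t) \<in> P \<Longrightarrow> l \<le> card V \<and> card V \<le> l\<^sup>2"
    and piece_outside: "(V, t) \<in> P \<Longrightarrow> V - {t} \<subseteq> Cs - K"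
    and pieces_disjoint: "(V, t) \<in> P \<Longrightarrow> (V', t') \<in> P \<Longrightarrow> (V, t) \<noteq> (V', t') \<Longrightarrow>
      (V - {t}) \<inter> (V' - {t'}) = {}"
    and pending_tree: "a \<in> K \<Longrightarrow> nbh_parent_tree Cs d q (insert a (S a)) a"
    and pending_outside: "a \<in> K \<Longrightarrow> S a \<subseteq> Cs - K"
    and pending_card: "a \<in> K \<Longrightarrow> card (S a) \<le> l - 2"
    and pendings_disjoint: "a \<in> K \<Longrightarrow> b \<in> K \<Longrightarrow> a \<noteq> b \<Longrightarrow> S a \<inter> S b = {}"
    and pending_piece_disjoint: "a \<in> K \<Longrightarrow> (V, t) \<in> P \<Longrightarrow> S a \<inter> (V - {t}) = {}"

lemma partial_decomposition_antimono:
  assumes "partial_decomposition Cs d l K' q P S" "K \<subseteq> K'"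
  shows "partial_decomposition Cs d l K q P S"
proof -
  interpret partial_decomposition Cs d l K' q P S by fact
  show ?thesis
  proof
    fix V t assume "(V, t) \<in> P"
    then show "V - {t} \<subseteq> Cs - K" using piece_outside \<open>K \<subseteq> K'\<close> by blast
  next
    fix a assume "a \<in> K"
    then have "a \<in> K'" using \<open>K \<subseteq> K'\<close> by blast
    then show "nbh_parent_tree Cs d q (insert a (S a)) a" "S a \<subseteq> Cs - K" "card (S a) \<le> l - 2"
      using pending_tree pending_outside pending_card \<open>K \<subseteq> K'\<close> by blast+
    fix b assume "b \<in> K" "a \<noteq> b"
    then show "S a \<inter> S b = {}" using pendings_disjoint \<open>a \<in> K'\<close> \<open>K \<subseteq> K'\<close> by blast
  next
    fix a V t assume "a \<in> K" "(V, t) \<in> P"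
    then show "S a \<inter> (V - {t}) = {}" using pending_piece_disjoint \<open>K \<subseteq> K'\<close> by blast
  qed (fact piece_tree piece_card pieces_disjoint)+
qed

lemma partial_decomposition_cong:
  assumes "partial_decomposition Cs d l K q P S" and agree: "\<And>v. v \<in> Cs - K \<Longrightarrow> q' v = q v"
  shows "partial_decomposition Cs d l K q' P S"
proof -
  interpret partial_decomposition Cs d l K q P S by fact
  show ?thesis
  proof
    fix V t assume "(V, t) \<in> P"
    moreover from this have "\<And>y. y \<in> V - {t} \<Longrightarrow> q' y = q y" using piece_outside agree by blast
    ultimately show "nbh_parent_tree Cs d q' V t" by (intro nbh_parent_tree_cong[OF piece_tree])
  next
    fix a assume "a \<in> K"
    moreover from this have "\<And>y. y \<in> insert a (S a) - {a} \<Longrightarrow> q' y = q y"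
      using pending_outside agree by blast
    ultimately show "nbh_parent_tree Cs d q' (insert a (S a)) a"
      by (intro nbh_parent_tree_cong[OF pending_tree])
  qed (fact piece_card piece_outside pieces_disjoint pending_outside pending_card pendings_disjoint
      pending_piece_disjoint)+
qed

context partial_decomposition
begin

lemma insert_piece:
  assumes "nbh_parent_tree Cs d q V t" "l \<le> card V" "card V \<le> l\<^sup>2" "V - {t} \<subseteq> Cs - K"
    and new_disjoint: "\<And>V' t'. (V', t') \<in> P \<Longrightarrow> (V - {t}) \<inter> (V' - {t'}) = {}"
    and pending_disjoint: "\<And>a. a \<in> K \<Longrightarrow> S a \<inter> (V - {t}) = {}"
  shows "partial_decomposition Cs d l K q (insert (V, t) P) S"
proof
  fix V' t' assume "(V', t') \<in> insert (V, t) P"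
  then have "nbh_parent_tree Cs d q V' t' \<and> (l \<le> card V' \<and> card V' \<le> l\<^sup>2) \<and> V' - {t'} \<subseteq> Cs - K"
  proof (cases "(V', t') = (V, t)")
    case False
    then have "(V', t') \<in> P" using \<open>(V', t') \<in> insert (V, t) P\<close> by blast
    then show ?thesis using piece_tree piece_card piece_outside by blast
  qed (use assms(1-4) in simp)
  then show "nbh_parent_tree Cs d q V' t'" "l \<le> card V' \<and> card V' \<le> l\<^sup>2" "V' - {t'} \<subseteq> Cs - K"
    by blast+
next
  fix V1 t1 V2 t2
  assume "(V1, t1) \<in> insert (V, t) P" "(V2, t2) \<in> insert (V, t) P" "(V1, t1) \<noteq> (V2, t2)"
  then show "(V1 - {t1}) \<inter> (V2 - {t2}) = {}"
    using pieces_disjoint[of V1 t1 V2 t2] new_disjoint[of V1 t1] new_disjoint[of V2 t2] by blast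
next
  fix a V' t' assume "a \<in> K" "(V', t') \<in> insert (V, t) P"
  then show "S a \<inter> (V' - {t'}) = {}" using pending_piece_disjoint[of a V' t'] pending_disjoint[of a] by blast
qed (fact pending_tree pending_outside pending_card pendings_disjoint)+

lemma update_pending:
  assumes "a \<in> K" "nbh_parent_tree Cs d q (insert a X) a" "X \<subseteq> Cs - K" "card X \<le> l - 2"
    and X_disjoint: "\<And>b. b \<in> K \<Longrightarrow> b \<noteq> a \<Longrightarrow> S b \<inter> X = {}"
    and X_piece_disjoint: "\<And>V t. (V, t) \<in> P \<Longrightarrow> X \<inter> (V - {t}) = {}"
  shows "partial_decomposition Cs d l K q P (S(a := X))"
proof
  fix b assume "b \<in> K"
  then show "nbh_parent_tree Cs d q (insert b ((S(a := X)) b)) b" "(S(a := X)) b \<subseteq> Cs - K"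
    "card ((S(a := X)) b) \<le> l - 2"
    using assms(2-4) pending_tree[of b] pending_outside[of b] pending_card[of b] by (cases "b = a"; simp)+
next
  fix b c assume "b \<in> K" "c \<in> K" "b \<noteq> c"
  then show "(S(a := X)) b \<inter> (S(a := X)) c = {}"
    using pendings_disjoint[of b c] X_disjoint[of b] X_disjoint[of c] by (cases "b = a"; cases "c = a") auto
next
  fix b V t assume "b \<in> K" "(V, t) \<in> P"
  then show "(S(a := X)) b \<inter> (V - {t}) = {}"
    using pending_piece_disjoint[of b V t] X_piece_disjoint[of V t] by (cases "b = a") simp_all
qed (fact piece_tree piece_card piece_outside pieces_disjoint)+

lemma graft_pendings:
  assumes T: "nbh_parent_tree Cs d q V t" and "A \<subseteq> V" "V \<subseteq> K"
  shows "nbh_parent_tree Cs d q (V \<union> (\<Union>a\<in>A. S a)) t"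
proof (rule nbh_parent_tree_graft_family[OF _ T \<open>A \<subseteq> V\<close>])
  show "finite A"
    using parent_tree.finite[OF nbh_parent_treeD(1)[OF T]] \<open>A \<subseteq> V\<close> by (rule finite_subset[rotated])
  fix a assume "a \<in> A"
  then have "a \<in> K" using assms(2,3) by blast
  then show "nbh_parent_tree Cs d q (insert a (S a)) a" "S a \<inter> V = {}"
    using pending_tree pending_outside \<open>V \<subseteq> K\<close> by blast+
  fix b assume "b \<in> A" "a \<noteq> b"
  then show "S a \<inter> S b = {}" using pendings_disjoint \<open>a \<in> K\<close> assms(2,3) by blast
qed

lemma card_union_pendings:
  assumes "finite A" "A \<subseteq> K"
  shows "card (B \<union> (\<Union>a\<in>A. S a)) \<le> card B + card A * (l - 2)"
proof -
  have small: "card (S a) \<le> l - 2" if "a \<in> A" for a using pending_card assms(2) that by blast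
  have "card (B \<union> (\<Union>a\<in>A. S a)) \<le> card B + card (\<Union>a\<in>A. S a)" by (rule card_Un_le)
  also have "card (\<Union>a\<in>A. S a) \<le> (\<Sum>a\<in>A. card (S a))" by (rule card_UN_le[OF assms(1)])
  also have "\<dots> \<le> card A * (l - 2)"
    using sum_bounded_above[of A "\<lambda>a. card (S a)"] small by simp
  finally show ?thesis by simp
qed

end

section \<open>Absorbing a greedy walk\<close>

lemma square_lower_bound: "l + l * (l - 2) \<le> (l::nat)\<^sup>2"
proof -
  have "l + l * (l - 2) \<le> l * l"
  proof (cases "l < 2")
    case True
    then consider "l = 0" | "l = 1" by linarith
    then show ?thesis by cases simp_all
  next
    case False
    then have "2 + (l - 2) = l" by simp
    then have "l * l = l * (2 + (l - 2))" by simp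
    also have "\<dots> = l * 2 + l * (l - 2)" by (rule distrib_left)
    finally show ?thesis by simp
  qed
  then show ?thesis by (simp add: power2_eq_square)
qed

lemma walk_size_le_square: "k \<le> l \<Longrightarrow> k + k * (l - 2) \<le> (l::nat)\<^sup>2"
proof -
  assume "k \<le> l"
  then have "k + k * (l - 2) \<le> l + l * (l - 2)" by (intro add_mono mult_le_mono1)
  then show ?thesis using square_lower_bound[of l] by linarith
qed

lemma attached_size_le_square: "x < l \<Longrightarrow> y \<le> l - 2 \<Longrightarrow> x + y + 1 \<le> (l::nat)\<^sup>2"
proof -
  assume "x < l" "y \<le> l - 2"
  then have "x + y + 1 \<le> l + 1 * (l - 2)" by simp
  also have "\<dots> \<le> l + l * (l - 2)" using \<open>x < l\<close> by (intro add_left_mono mult_le_mono1) simp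
  finally show ?thesis using square_lower_bound[of l] by linarith
qed

definition walk_parent :: "(nat \<Rightarrow> 'a) \<Rightarrow> nat \<Rightarrow> ('a \<Rightarrow> 'a) \<Rightarrow> 'a \<Rightarrow> 'a" where
  "walk_parent c k q v = (if v \<in> c ` {..<k} then c (Suc (inv_into {..<k} c v)) else q v)"

lemma walk_parent_step: "inj_on c {..<k} \<Longrightarrow> i < k \<Longrightarrow> walk_parent c k q (c i) = c (Suc i)"
  unfolding walk_parent_def by (simp add: inv_into_f_f)

lemma walk_parent_outside: "v \<notin> c ` {..<k} \<Longrightarrow> walk_parent c k q v = q v"
  unfolding walk_parent_def by simp

text \<open>The state after taking a walk with vertex set C and decomposing everything outside K \<union> C
  recursively; the parent map q has already been redirected along the walk.\<close>
locale walk_step = partial_decomposition Cs d l "K \<union> C" q P S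
  for Cs d l K C q P S +
  fixes c :: "nat \<Rightarrow> 'a" and k :: nat
  assumes walk: "greedy_walk Cs d K c k"
    and walk_set: "C = c ` {..<k}"
    and parent_along_walk: "\<And>i. i < k \<Longrightarrow> q (c i) = c (Suc i)"
begin

lemma walk_facts: "0 < k" "inj_on c {..<k}" "C \<subseteq> Cs - K" "\<And>i. Suc i < k \<Longrightarrow> nearest_step Cs d c i"
  using walk unfolding greedy_walk_def walk_set by blast+

lemma path_tree:
  assumes "n \<le> Suc k" "0 < n" "inj_on c {..<n}" "c ` {..<n} \<subseteq> Cs"
    and steps: "\<And>i. Suc i < n \<Longrightarrow> nearest_step Cs d c i"
  shows "nbh_parent_tree Cs d q (c ` {..<n}) (c (n - 1))"
proof (rule nbh_parent_tree_path[OF assms(2-4)])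
  fix i assume "Suc i < n"
  then show "q (c i) = c (Suc i)" using parent_along_walk \<open>n \<le> Suc k\<close> by simp
  fix w assume "w \<in> Cs" "d (c i) w < d (c i) (c (Suc i))"
  then show "w \<in> c ` {..i}" using steps[OF \<open>Suc i < n\<close>] unfolding nearest_step_def by blast
qed

definition region :: "'a set" where "region = C \<union> (\<Union>v\<in>C. S v)"

lemma walk_tree: "nbh_parent_tree Cs d q region (c (k - 1))"
  unfolding region_def
proof (rule graft_pendings)
  have "c ` {..<k} \<subseteq> Cs" using walk_facts(3) unfolding walk_set by blast
  then show "nbh_parent_tree Cs d q C (c (k - 1))"
    using path_tree[OF le_SucI[OF order.refl] walk_facts(1,2)] walk_facts(4) walk_set by simp
qed auto

lemma extended_tree:
  assumes "c k \<in> K" and step: "nearest_step Cs d c (k - 1)"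
  shows "nbh_parent_tree Cs d q (insert (c k) (region \<union> S (c k))) (c k)"
proof -
  have image: "c ` {..<Suc k} = insert (c k) C" using walk_set by (simp add: lessThan_Suc)
  have "c (Suc (k - 1)) \<in> Cs" using step unfolding nearest_step_def by (rule conjunct1)
  then have "c k \<in> Cs" using walk_facts(1) by simp
  then have "c ` {..<Suc k} \<subseteq> Cs" using walk_facts(3) unfolding image by blast
  moreover have "c k \<notin> C" using assms(1) walk_facts(3) by blast
  then have "inj_on c {..<Suc k}" using walk_facts(2) walk_set by (simp add: lessThan_Suc)
  moreover have "nearest_step Cs d c i" if "Suc i < Suc k" for i
  proof (cases "Suc i < k")
    case False
    then have "i = k - 1" using that by simp
    then show ?thesis using step by simp
  qed (rule walk_facts(4))
  ultimately have "nbh_parent_tree Cs d q (c ` {..<Suc k}) (c (Suc k - 1))"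
    by (intro path_tree) simp_all
  then have "nbh_parent_tree Cs d q (insert (c k) C) (c k)" using image by simp
  then have "nbh_parent_tree Cs d q (insert (c k) C \<union> (\<Union>v\<in>insert (c k) C. S v)) (c k)"
    by (rule graft_pendings) (use assms(1) in auto)
  moreover have "insert (c k) C \<union> (\<Union>v\<in>insert (c k) C. S v) = insert (c k) (region \<union> S (c k))"
    by (simp add: region_def Un_ac)
  ultimately show ?thesis by simp
qed

lemma restricted: "partial_decomposition Cs d l K q P S"
  by (rule partial_decomposition_antimono[OF partial_decomposition_axioms]) blast

lemma region_outside_K: "region \<subseteq> Cs - K"
proof -
  have "S v \<subseteq> Cs - K" if "v \<in> C" for v using pending_outside[of v] that by blast
  then show ?thesis unfolding region_def using walk_facts(3) by blast
qed

lemma region_piece_disjoint: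
  assumes "(V, t) \<in> P"
  shows "region \<inter> (V - {t}) = {}"
proof -
  have "S v \<inter> (V - {t}) = {}" if "v \<in> C" for v using pending_piece_disjoint[OF _ assms] that by blast
  then show ?thesis unfolding region_def using piece_outside[OF assms] by blast
qed

lemma region_pending_disjoint:
  assumes "b \<in> K"
  shows "S b \<inter> region = {}"
proof -
  have "S b \<inter> S v = {}" if "v \<in> C" for v
    using pendings_disjoint[of b v] that assms walk_facts(3) by blast
  moreover have "S b \<inter> C = {}" using pending_outside[of b] assms by blast
  ultimately show ?thesis unfolding region_def by blast
qed

lemma region_card: "k \<le> card region" "card region \<le> k + k * (l - 2)"
proof -
  have C: "finite C" "card C = k" using walk_facts(2) unfolding walk_set by (auto simp: card_image)
  have "finite region" using parent_tree.finite[OF nbh_parent_treeD(1)[OF walk_tree]] .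
  then have "card C \<le> card region" by (rule card_mono) (simp add: region_def)
  then show "k \<le> card region" using C by simp
  have "card region \<le> card C + card C * (l - 2)"
    unfolding region_def by (rule card_union_pendings) (use C in auto)
  then show "card region \<le> k + k * (l - 2)" using C by simp
qed

lemma region_cover:
  assumes "Cs - (K \<union> C) \<subseteq> \<Union>(fst ` P) \<union> (\<Union>a\<in>K \<union> C. S a)"
  shows "Cs - K \<subseteq> region \<union> \<Union>(fst ` P) \<union> (\<Union>b\<in>K. S b)"
proof
  fix x assume x: "x \<in> Cs - K"
  show "x \<in> region \<union> \<Union>(fst ` P) \<union> (\<Union>b\<in>K. S b)"
  proof (cases "x \<in> C")
    case False
    then have "x \<in> \<Union>(fst ` P) \<or> (\<exists>a\<in>K \<union> C. x \<in> S a)" using x assms by blast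
    then show ?thesis unfolding region_def by blast
  qed (simp add: region_def)
qed

lemma extended_region_facts:
  assumes "c k \<in> K"
  shows "region \<union> S (c k) \<subseteq> Cs - K" "c k \<notin> region \<union> S (c k)"
    and "\<And>b. b \<in> K \<Longrightarrow> b \<noteq> c k \<Longrightarrow> S b \<inter> (region \<union> S (c k)) = {}"
    and "\<And>V t. (V, t) \<in> P \<Longrightarrow> (region \<union> S (c k)) \<inter> (V - {t}) = {}"
    and "card (region \<union> S (c k)) \<le> card region + (l - 2)"
proof -
  have a: "c k \<in> K \<union> C" using assms by blast
  show "region \<union> S (c k) \<subseteq> Cs - K" "c k \<notin> region \<union> S (c k)"
    using region_outside_K pending_outside[OF a] assms by blast+
  show "S b \<inter> (region \<union> S (c k)) = {}" if "b \<in> K" "b \<noteq> c k" for b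
    using region_pending_disjoint[OF that(1)] pendings_disjoint[of b "c k"] that a by blast
  show "(region \<union> S (c k)) \<inter> (V - {t}) = {}" if "(V, t) \<in> P" for V t
    using region_piece_disjoint[OF that] pending_piece_disjoint[OF a that] by blast
  have "card (region \<union> S (c k)) \<le> card region + card (S (c k))" by (rule card_Un_le)
  then show "card (region \<union> S (c k)) \<le> card region + (l - 2)" using pending_card[OF a] by linarith
qed

lemma close_walk:
  assumes "l \<le> card region" "k \<le> l"
  shows "partial_decomposition Cs d l K q (insert (region, c (k - 1)) P) S"
proof (rule partial_decomposition.insert_piece[OF restricted walk_tree assms(1)])
  show "card region \<le> l\<^sup>2" using region_card(2) walk_size_le_square[OF assms(2)] by linarith
  show "region - {c (k - 1)} \<subseteq> Cs - K" using region_outside_K by blast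
  show "(region - {c (k - 1)}) \<inter> (V - {t}) = {}" if "(V, t) \<in> P" for V t
    using region_piece_disjoint[OF that] by blast
  show "S b \<inter> (region - {c (k - 1)}) = {}" if "b \<in> K" for b
    using region_pending_disjoint[OF that] by blast
qed

lemma extended_card:
  assumes "c k \<in> K" "nearest_step Cs d c (k - 1)"
  shows "card (insert (c k) (region \<union> S (c k))) = Suc (card (region \<union> S (c k)))"
proof -
  have "finite (insert (c k) (region \<union> S (c k)))"
    using parent_tree.finite[OF nbh_parent_treeD(1)[OF extended_tree[OF assms]]] .
  then show ?thesis using extended_region_facts(2)[OF assms(1)] by (simp add: card_insert_disjoint)
qed

lemma attach_walk_as_pending:
  assumes "c k \<in> K" "nearest_step Cs d c (k - 1)" "card (insert (c k) (region \<union> S (c k))) < l"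
  shows "partial_decomposition Cs d l K q P (S(c k := region \<union> S (c k)))"
proof (rule partial_decomposition.update_pending[OF restricted assms(1) extended_tree[OF assms(1,2)]])
  show "card (region \<union> S (c k)) \<le> l - 2" using assms(3) extended_card[OF assms(1,2)] by simp
qed (fact extended_region_facts[OF assms(1)])+

lemma attach_walk_as_piece:
  assumes "c k \<in> K" "nearest_step Cs d c (k - 1)" "card region < l"
    and "l \<le> card (insert (c k) (region \<union> S (c k)))"
  shows "partial_decomposition Cs d l K q
    (insert (insert (c k) (region \<union> S (c k)), c k) P) (S(c k := {}))"
proof -
  note facts = extended_region_facts[OF assms(1)]
  have "c k \<in> K \<union> C" using assms(1) by blast
  then have "c k \<in> Cs" using nbh_parent_treeD(2)[OF pending_tree] by blast
  then interpret D: partial_decomposition Cs d l K q P "S(c k := {})"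
    by (intro partial_decomposition.update_pending[OF restricted assms(1)])
      (simp_all add: nbh_parent_tree_singleton)
  have interior: "insert (c k) (region \<union> S (c k)) - {c k} = region \<union> S (c k)" using facts(2) by blast
  show ?thesis
  proof (rule D.insert_piece[OF extended_tree[OF assms(1,2)] assms(4)])
    show "card (insert (c k) (region \<union> S (c k))) \<le> l\<^sup>2"
      using extended_card[OF assms(1,2)] facts(5) attached_size_le_square[OF assms(3), of "l - 2"]
      by linarith
    show "insert (c k) (region \<union> S (c k)) - {c k} \<subseteq> Cs - K" using facts(1) interior by simp
    show "(insert (c k) (region \<union> S (c k)) - {c k}) \<inter> (V - {t}) = {}" if "(V, t) \<in> P" for V t
      using facts(4)[OF that] interior by simp
    show "(S(c k := {})) b \<inter> (insert (c k) (region \<union> S (c k)) - {c k}) = {}" if "b \<in> K" for b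
      using facts(3)[OF that] interior by simp
  qed
qed

end

lemma partial_decomposition_trivial:
  assumes "K \<subseteq> Cs"
  shows "partial_decomposition Cs d l K q {} (\<lambda>_. {})"
  by unfold_locales (use assms in \<open>auto intro: nbh_parent_tree_singleton\<close>)

lemma decomposition_step:
  assumes W: "greedy_walk Cs d K c k" "k \<le> l"
    and stop: "k = l \<or> c k \<in> K \<and> nearest_step Cs d c (k - 1)"
    and C: "C = c ` {..<k}"
    and D: "partial_decomposition Cs d l (K \<union> C) q P S"
    and cover: "Cs - (K \<union> C) \<subseteq> \<Union>(fst ` P) \<union> (\<Union>a\<in>K \<union> C. S a)"
  shows "\<exists>q P S. partial_decomposition Cs d l K q P S \<and> Cs - K \<subseteq> \<Union>(fst ` P) \<union> (\<Union>a\<in>K. S a)"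
proof -
  have inj: "inj_on c {..<k}" using W(1) unfolding greedy_walk_def by blast
  interpret walk_step Cs d l K C "walk_parent c k q" P S c k
    by (intro walk_step.intro partial_decomposition_cong[OF D] walk_step_axioms.intro)
      (simp_all add: C walk_parent_outside walk_parent_step inj W(1))
  have cover': "Cs - K \<subseteq> region \<union> \<Union>(fst ` P) \<union> (\<Union>b\<in>K. S b)" by (rule region_cover[OF cover])
  consider "l \<le> card region" | "card region < l" "c k \<in> K" "nearest_step Cs d c (k - 1)"
    using stop region_card(1) by linarith
  then show ?thesis
  proof cases
    case 1
    have "Cs - K \<subseteq> \<Union>(fst ` insert (region, c (k - 1)) P) \<union> (\<Union>b\<in>K. S b)" using cover' by auto
    then show ?thesis using close_walk[OF 1 W(2)] by blast
  next
    case 2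
    let ?X = "region \<union> S (c k)"
    show ?thesis
    proof (cases "l \<le> card (insert (c k) ?X)")
      case True
      have "Cs - K \<subseteq> \<Union>(fst ` insert (insert (c k) ?X, c k) P) \<union> (\<Union>b\<in>K. (S(c k := {})) b)"
        using cover' by auto
      then show ?thesis using attach_walk_as_piece[OF 2(2,3,1) True] by blast
    next
      case False
      have "Cs - K \<subseteq> \<Union>(fst ` P) \<union> (\<Union>b\<in>K. (S(c k := ?X)) b)"
        using cover' 2(2) by auto
      then show ?thesis using attach_walk_as_pending[OF 2(2,3)] False by (meson not_le)
    qed
  qed
qed

lemma decomposition_exists:
  assumes "finite Cs" "0 < l" "l \<le> card Cs" "K \<subseteq> Cs"
  shows "\<exists>q P S. partial_decomposition Cs d l K q P S \<and> Cs - K \<subseteq> \<Union>(fst ` P) \<union> (\<Union>a\<in>K. S a)"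
  using assms(4)
proof (induction "card (Cs - K)" arbitrary: K rule: less_induct)
  case less
  show ?case
  proof (cases "Cs - K = {}")
    case True
    then show ?thesis using partial_decomposition_trivial[OF less.prems] by blast
  next
    case False
    then obtain c k where W: "greedy_walk Cs d K c k" "k \<le> l"
      and stop: "k = l \<or> c k \<in> K \<and> nearest_step Cs d c (k - 1)"
      using greedy_walk_exists[OF assms(1) False assms(3,2)] by blast
    define C where "C = c ` {..<k}"
    have "c 0 \<in> C" "C \<subseteq> Cs - K" using W(1) unfolding greedy_walk_def C_def by auto
    then have "card (Cs - (K \<union> C)) < card (Cs - K)"
      using assms(1) by (intro psubset_card_mono) auto
    moreover have "K \<union> C \<subseteq> Cs" using less.prems \<open>C \<subseteq> Cs - K\<close> by blast
    ultimately have "\<exists>q P S. partial_decomposition Cs d l (K \<union> C) q P S \<and>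
        Cs - (K \<union> C) \<subseteq> \<Union>(fst ` P) \<union> (\<Union>a\<in>K \<union> C. S a)"
      by (rule less.hyps)
    then obtain q P S where "partial_decomposition Cs d l (K \<union> C) q P S"
      "Cs - (K \<union> C) \<subseteq> \<Union>(fst ` P) \<union> (\<Union>a\<in>K \<union> C. S a)"
      by blast
    then show ?thesis by (rule decomposition_step[OF W stop C_def])
  qed
qed

lemma neighborhood_trees_of_decomposition:
  assumes D: "partial_decomposition Cs d l K q P S" and fin: "finite Cs" and cover: "Cs \<subseteq> \<Union>(fst ` P)"
  shows "\<exists>TT :: 'a rtree set.
           (\<forall>T\<in>TT. neighborhood_tree d Cs T) \<and>
           (\<forall>(V, E, r)\<in>TT. l \<le> card V \<and> card V \<le> l^2) \<and>
           (\<Union>(V, E, r)\<in>TT. V) = Cs \<and>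
           (\<forall>(V, E, r)\<in>TT. \<forall>(V', E', r')\<in>TT.
               (V, E, r) \<noteq> (V', E', r') \<longrightarrow> (V - {r}) \<inter> (V' - {r'}) = {})"
proof -
  interpret partial_decomposition Cs d l K q P S by (rule D)
  define TT where "TT = (\<lambda>(V, t). (V, parent_edges q V t, t)) ` P"
  have members: "(V, E, r) \<in> TT \<longleftrightarrow> (V, r) \<in> P \<and> E = parent_edges q V r" for V E r
    unfolding TT_def by auto
  have trees: "neighborhood_tree d Cs (V, E, r)" "l \<le> card V \<and> card V \<le> l\<^sup>2"
    if "(V, E, r) \<in> TT" for V E r
    using that neighborhood_tree_parent_edges[OF piece_tree fin] piece_card unfolding members by auto
  have disjoint: "(V - {r}) \<inter> (V' - {r'}) = {}"
    if "(V, E, r) \<in> TT" "(V', E', r') \<in> TT" "(V, E, r) \<noteq> (V', E', r')" for V E r V' E' r'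
  proof (rule pieces_disjoint)
    show "(V, r) \<in> P" "(V', r') \<in> P" using that(1,2) unfolding members by blast+
    show "(V, r) \<noteq> (V', r')" using that unfolding members by blast
  qed
  have "V \<subseteq> Cs" if "(V, t) \<in> P" for V t using nbh_parent_treeD(2)[OF piece_tree[OF that]] .
  then have "\<Union>(fst ` P) = Cs" using cover by force
  moreover have "(\<lambda>(V, E, r). V) ` TT = fst ` P" unfolding TT_def image_image by (simp add: case_prod_beta)
  ultimately have "(\<Union>(V, E, r)\<in>TT. V) = Cs" by simp
  moreover have "\<forall>T\<in>TT. neighborhood_tree d Cs T" using trees(1) by force
  moreover have "\<forall>(V, E, r)\<in>TT. l \<le> card V \<and> card V \<le> l^2" using trees(2) by force
  moreover have "\<forall>(V, E, r)\<in>TT. \<forall>(V', E', r')\<in>TT.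
      (V, E, r) \<noteq> (V', E', r') \<longrightarrow> (V - {r}) \<inter> (V' - {r'}) = {}"
    unfolding Ball_def split_paired_All prod.case by (intro allI impI) (rule disjoint)
  ultimately show ?thesis by blast
qed

theorem lemma4:
  fixes F C :: "'a set" and d x :: "'a \<Rightarrow> 'a \<Rightarrow> real" and l0 l :: nat and Cs :: "'a set"
  assumes "finite F" and "finite C"
    and "is_metric_on (F \<union> C) d"
    and "\<forall>i\<in>F. \<forall>j\<in>C. x i j \<ge> 0"
    and "\<forall>j\<in>C. (\<Sum>i\<in>F. x i j) = 1"
    and "l0 > 0"
    and "client_reps F C d x l0 Cs"
    and "l > 0" and "card Cs \<ge> l"
  shows "\<exists>TT :: 'a rtree set.
           (\<forall>T\<in>TT. neighborhood_tree d Cs T) \<and>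
           (\<forall>(V, E, r)\<in>TT. l \<le> card V \<and> card V \<le> l^2) \<and>
           (\<Union>(V, E, r)\<in>TT. V) = Cs \<and>
           (\<forall>(V, E, r)\<in>TT. \<forall>(V', E', r')\<in>TT.
               (V, E, r) \<noteq> (V', E', r') \<longrightarrow> (V - {r}) \<inter> (V' - {r'}) = {})"
proof -
  have fin: "finite Cs" using \<open>l > 0\<close> \<open>card Cs \<ge> l\<close> card_gt_0_iff by (metis less_le_trans)
  obtain q P S where D: "partial_decomposition Cs d l {} q P S" and cover: "Cs \<subseteq> \<Union>(fst ` P)"
    using decomposition_exists[OF fin \<open>l > 0\<close> \<open>card Cs \<ge> l\<close>, of "{}" d] by auto
  show ?thesis by (rule neighborhood_trees_of_decomposition[OF D fin cover])
qed

end
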